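(* Let $(G,k)$ be an instance of \textsc{Bicolored $P_3$ Deletion} and let $u,v,w,z$ be vertices such that $G[\{u,v,w,z\}]$ is an LC-Diamond, an LO-Diamond, or an IIZ-Diamond (with the vertex labels as in the definitions). Then $(G,k)$ is a yes-instance if and only if at least one of $(G-\{v,w\},k-1)$, $(G-\{\{u,v\},\{u,z\}\},k-2)$, $(G-\{\{u,v\},\{v,z\},\{w,z\}\},k-3)$ is a yes-instance.
   Context: A two-colored graph $G=(V,E_r,E_b)$ is a finite simple undirected graph whose edge set $E=E_r\uplus E_b$ is partitioned into red and blue edges; $G-F$ removes the edges in $F$ (and $G-\{v,w\}$ removes the single edge $\{v,w\}$). A bicolored $P_3$ is an induced subgraph on three vertices $a,b,c$ with edges $\{a,b\},\{b,c\}$ of different colors and $\{a,c\}\notin E$. The following are defined up to swapping the two colors (both versions count). An LC-Diamond on $u,v,w,z$: edges exactly $\{u,v\}$ blue, $\{v,w\}$ red, $\{u,z\}$ blue, $\{v,z\}$ red, $\{w,z\}$ blue. An LO-Diamond on $u,v,w,z$: edges exactly $\{u,v\}$ blue, $\{v,w\}$ red, $\{u,z\}$ blue, $\{v,z\}$ blue, $\{w,z\}$ red. An IIZ-Diamond on $u,v,w,z$: edges exactly $\{u,v\}$ blue, $\{v,w\}$ red, $\{u,z\}$ red, $\{v,z\}$ blue, $\{w,z\}$ blue. \textsc{Bicolored $P_3$ Deletion}: given $G$ and an integer $k$, decide whether some $S\subseteq E$ with $|S|\le k$ makes $G-S$ free of induced bicolored $P_3$s (no-instance if $k<0$). *)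

theory Defs
  imports Main
begin

definition two_colored_graph :: "'a set \<Rightarrow> 'a set set \<Rightarrow> 'a set set \<Rightarrow> bool" where
  "two_colored_graph V Er Eb \<longleftrightarrow> finite V \<and> Er \<inter> Eb = {} \<and>
     (\<forall>e \<in> Er \<union> Eb. \<exists>x y. x \<noteq> y \<and> x \<in> V \<and> y \<in> V \<and> e = {x, y})"

definition bicolored_P3 :: "'a set set \<Rightarrow> 'a set set \<Rightarrow> 'a \<Rightarrow> 'a \<Rightarrow> 'a \<Rightarrow> bool" where
  "bicolored_P3 Er Eb a b c \<longleftrightarrow> a \<noteq> b \<and> b \<noteq> c \<and> a \<noteq> c \<and>
     (({a,b} \<in> Er \<and> {b,c} \<in> Eb) \<or> ({a,b} \<in> Eb \<and> {b,c} \<in> Er)) \<and>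
     {a,c} \<notin> Er \<union> Eb"

definition P3_free :: "'a set set \<Rightarrow> 'a set set \<Rightarrow> bool" where
  "P3_free Er Eb \<longleftrightarrow> (\<nexists>a b c. bicolored_P3 Er Eb a b c)"

text \<open>(G,k) is a yes-instance of Bicolored P3 Deletion (no-instance if k < 0).
  G - S removes the edges in S from both colour classes.\<close>
definition yes_instance :: "'a set \<Rightarrow> 'a set set \<Rightarrow> 'a set set \<Rightarrow> int \<Rightarrow> bool" where
  "yes_instance V Er Eb k \<longleftrightarrow> k \<ge> 0 \<and>
     (\<exists>S. S \<subseteq> Er \<union> Eb \<and> finite S \<and> int (card S) \<le> k \<and> P3_free (Er - S) (Eb - S))"

definition LC_pat :: "'a set set \<Rightarrow> 'a set set \<Rightarrow> 'a \<Rightarrow> 'a \<Rightarrow> 'a \<Rightarrow> 'a \<Rightarrow> bool" where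
  "LC_pat R B u v w z \<longleftrightarrow> distinct [u,v,w,z] \<and>
     {u,v} \<in> B \<and> {v,w} \<in> R \<and> {u,z} \<in> B \<and> {v,z} \<in> R \<and> {w,z} \<in> B \<and> {u,w} \<notin> R \<union> B"

definition LO_pat :: "'a set set \<Rightarrow> 'a set set \<Rightarrow> 'a \<Rightarrow> 'a \<Rightarrow> 'a \<Rightarrow> 'a \<Rightarrow> bool" where
  "LO_pat R B u v w z \<longleftrightarrow> distinct [u,v,w,z] \<and>
     {u,v} \<in> B \<and> {v,w} \<in> R \<and> {u,z} \<in> B \<and> {v,z} \<in> B \<and> {w,z} \<in> R \<and> {u,w} \<notin> R \<union> B"

definition IIZ_pat :: "'a set set \<Rightarrow> 'a set set \<Rightarrow> 'a \<Rightarrow> 'a \<Rightarrow> 'a \<Rightarrow> 'a \<Rightarrow> bool" where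
  "IIZ_pat R B u v w z \<longleftrightarrow> distinct [u,v,w,z] \<and>
     {u,v} \<in> B \<and> {v,w} \<in> R \<and> {u,z} \<in> R \<and> {v,z} \<in> B \<and> {w,z} \<in> B \<and> {u,w} \<notin> R \<union> B"

definition LC_diamond where
  "LC_diamond Er Eb u v w z \<longleftrightarrow> LC_pat Er Eb u v w z \<or> LC_pat Eb Er u v w z"
definition LO_diamond where
  "LO_diamond Er Eb u v w z \<longleftrightarrow> LO_pat Er Eb u v w z \<or> LO_pat Eb Er u v w z"
definition IIZ_diamond where
  "IIZ_diamond Er Eb u v w z \<longleftrightarrow> IIZ_pat Er Eb u v w z \<or> IIZ_pat Eb Er u v w z"

end

theory Submission
  imports Defs
begin

text \<open>Deleting an edge set F that is contained in some solution S leaves S - F as a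
  solution of the smaller instance, and conversely a solution of G - F extends by F; so
  branching on a family of edge sets is exact as soon as every solution contains one of
  them. In each diamond the induced bicolored P3 u-v-w forces {v,w} or {u,v} into S. If
  {u,v} is deleted but {v,w} kept, the bicolored P3s created by that deletion (centred at
  z, and then at z or w) force {u,z}, or both {v,z} and {w,z}.\<close>

definition solution :: "'a set set \<Rightarrow> 'a set set \<Rightarrow> 'a set set \<Rightarrow> bool" where
  "solution Er Eb S \<longleftrightarrow> S \<subseteq> Er \<union> Eb \<and> finite S \<and> P3_free (Er - S) (Eb - S)"

lemma yes_instance_iff_solution:
  "yes_instance V Er Eb k \<longleftrightarrow> (\<exists>S. solution Er Eb S \<and> int (card S) \<le> k)"
  unfolding yes_instance_def solution_def by (meson of_nat_0_le_iff order_trans)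

lemma P3_free_commute: "P3_free Er Eb \<longleftrightarrow> P3_free Eb Er"
  unfolding P3_free_def bicolored_P3_def by (auto simp: insert_commute)

lemma solution_Diff:
  assumes "solution Er Eb S" and "F \<subseteq> S"
  shows "solution (Er - F) (Eb - F) (S - F)"
proof -
  have "Er - F - (S - F) = Er - S" "Eb - F - (S - F) = Eb - S"
    using assms(2) by auto
  with assms(1) show ?thesis
    unfolding solution_def by auto
qed

lemma solution_Un:
  assumes "solution (Er - F) (Eb - F) S" and "F \<subseteq> Er \<union> Eb" and "finite F"
  shows "solution Er Eb (S \<union> F)"
proof -
  have "Er - (S \<union> F) = Er - F - S" "Eb - (S \<union> F) = Eb - F - S"
    by auto
  with assms show ?thesis
    unfolding solution_def by auto
qed

lemma yes_instance_Diff_iff: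
  assumes "F \<subseteq> Er \<union> Eb" and "finite F"
  shows "yes_instance V (Er - F) (Eb - F) (k - int (card F)) \<longleftrightarrow>
           (\<exists>S. solution Er Eb S \<and> F \<subseteq> S \<and> int (card S) \<le> k)"
proof
  assume "yes_instance V (Er - F) (Eb - F) (k - int (card F))"
  then obtain S where S: "solution (Er - F) (Eb - F) S" "int (card S) \<le> k - int (card F)"
    unfolding yes_instance_iff_solution by blast
  have "card (S \<union> F) \<le> card S + card F"
    by (rule card_Un_le)
  with S solution_Un[OF S(1) assms] show "\<exists>S. solution Er Eb S \<and> F \<subseteq> S \<and> int (card S) \<le> k"
    by (intro exI[of _ "S \<union> F"]) auto
next
  assume "\<exists>S. solution Er Eb S \<and> F \<subseteq> S \<and> int (card S) \<le> k"
  then obtain S where S: "solution Er Eb S" "F \<subseteq> S" "int (card S) \<le> k"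
    by blast
  then have "card (S - F) = card S - card F" "card F \<le> card S"
    using assms(2) by (auto simp: card_Diff_subset solution_def intro: card_mono)
  with S solution_Diff[OF S(1,2)] show "yes_instance V (Er - F) (Eb - F) (k - int (card F))"
    unfolding yes_instance_iff_solution by (intro exI[of _ "S - F"]) auto
qed

lemma yes_instance_branch:
  assumes "\<forall>F \<in> \<F>. F \<subseteq> Er \<union> Eb \<and> finite F"
    and "\<And>S. solution Er Eb S \<Longrightarrow> \<exists>F \<in> \<F>. F \<subseteq> S"
  shows "yes_instance V Er Eb k \<longleftrightarrow>
           (\<exists>F \<in> \<F>. yes_instance V (Er - F) (Eb - F) (k - int (card F)))"
  using assms yes_instance_Diff_iff unfolding yes_instance_iff_solution by meson

lemma P3_free_Diff_hits_P3:
  assumes "P3_free (R - S) (B - S)" and "distinct [a, b, c]"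
    and "({a,b} \<in> R \<and> {b,c} \<in> B) \<or> ({a,b} \<in> B \<and> {b,c} \<in> R)"
    and "{a,c} \<notin> (R - S) \<union> (B - S)"
  shows "{a,b} \<in> S \<or> {b,c} \<in> S"
  using assms unfolding P3_free_def bicolored_P3_def by auto

lemma LC_pat_solution_cases:
  assumes "LC_pat R B u v w z" and "P3_free (R - S) (B - S)"
  shows "{v,w} \<in> S \<or> ({u,v} \<in> S \<and> {u,z} \<in> S) \<or> ({u,v} \<in> S \<and> {v,z} \<in> S \<and> {w,z} \<in> S)"
  using assms(1) P3_free_Diff_hits_P3[OF assms(2), of u v w] P3_free_Diff_hits_P3[OF assms(2), of u z v]
    P3_free_Diff_hits_P3[OF assms(2), of z w v]
  unfolding LC_pat_def by (auto simp: insert_commute)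

lemma LO_pat_solution_cases:
  assumes "LO_pat R B u v w z" and "P3_free (R - S) (B - S)"
  shows "{v,w} \<in> S \<or> ({u,v} \<in> S \<and> {u,z} \<in> S) \<or> ({u,v} \<in> S \<and> {v,z} \<in> S \<and> {w,z} \<in> S)"
  using assms(1) P3_free_Diff_hits_P3[OF assms(2), of u v w] P3_free_Diff_hits_P3[OF assms(2), of u z w]
    P3_free_Diff_hits_P3[OF assms(2), of z v w]
  unfolding LO_pat_def by (auto simp: insert_commute)

lemma IIZ_pat_solution_cases:
  assumes "IIZ_pat R B u v w z" and "P3_free (R - S) (B - S)"
  shows "{v,w} \<in> S \<or> ({u,v} \<in> S \<and> {u,z} \<in> S) \<or> ({u,v} \<in> S \<and> {v,z} \<in> S \<and> {w,z} \<in> S)"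
  using assms(1) P3_free_Diff_hits_P3[OF assms(2), of u v w] P3_free_Diff_hits_P3[OF assms(2), of u z v]
    P3_free_Diff_hits_P3[OF assms(2), of u z w]
  unfolding IIZ_pat_def by (auto simp: insert_commute)

lemma diamond_solution_cases:
  assumes "LC_diamond Er Eb u v w z \<or> LO_diamond Er Eb u v w z \<or> IIZ_diamond Er Eb u v w z"
    and "solution Er Eb S"
  shows "\<exists>F \<in> {{{v,w}}, {{u,v},{u,z}}, {{u,v},{v,z},{w,z}}}. F \<subseteq> S"
proof -
  have "P3_free (Er - S) (Eb - S)" "P3_free (Eb - S) (Er - S)"
    using assms(2) P3_free_commute unfolding solution_def by blast+
  with assms(1) have "{v,w} \<in> S \<or> ({u,v} \<in> S \<and> {u,z} \<in> S) \<or> ({u,v} \<in> S \<and> {v,z} \<in> S \<and> {w,z} \<in> S)"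
    unfolding LC_diamond_def LO_diamond_def IIZ_diamond_def
    by (elim disjE) (erule LC_pat_solution_cases LO_pat_solution_cases IIZ_pat_solution_cases; assumption)+
  then show ?thesis
    by simp
qed

lemma diamond_distinct_edges:
  assumes "LC_diamond Er Eb u v w z \<or> LO_diamond Er Eb u v w z \<or> IIZ_diamond Er Eb u v w z"
  shows "distinct [u,v,w,z]" and "{{v,w},{u,v},{u,z},{v,z},{w,z}} \<subseteq> Er \<union> Eb"
  using assms unfolding LC_diamond_def LO_diamond_def IIZ_diamond_def
    LC_pat_def LO_pat_def IIZ_pat_def by blast+

theorem lemma6:
  fixes V :: "'a set" and Er Eb :: "'a set set" and k :: int and u v w z :: 'a
  assumes "two_colored_graph V Er Eb"
    and "u \<in> V" "v \<in> V" "w \<in> V" "z \<in> V"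
    and "LC_diamond Er Eb u v w z \<or> LO_diamond Er Eb u v w z \<or> IIZ_diamond Er Eb u v w z"
  shows "yes_instance V Er Eb k \<longleftrightarrow>
           (yes_instance V (Er - {{v,w}}) (Eb - {{v,w}}) (k - 1) \<or>
            yes_instance V (Er - {{u,v},{u,z}}) (Eb - {{u,v},{u,z}}) (k - 2) \<or>
            yes_instance V (Er - {{u,v},{v,z},{w,z}}) (Eb - {{u,v},{v,z},{w,z}}) (k - 3))"
proof -
  note distinct = diamond_distinct_edges(1)[OF assms(6)]
    and edges = diamond_distinct_edges(2)[OF assms(6)]
  have "yes_instance V Er Eb k \<longleftrightarrow>
          (\<exists>F \<in> {{{v,w}}, {{u,v},{u,z}}, {{u,v},{v,z},{w,z}}}.
             yes_instance V (Er - F) (Eb - F) (k - int (card F)))"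
  proof (rule yes_instance_branch)
    show "\<forall>F \<in> {{{v,w}}, {{u,v},{u,z}}, {{u,v},{v,z},{w,z}}}. F \<subseteq> Er \<union> Eb \<and> finite F"
      using edges by simp
  qed (rule diamond_solution_cases[OF assms(6)])
  moreover have "card {{u,v},{u,z}} = 2" "card {{u,v},{v,z},{w,z}} = 3"
    using distinct by (auto simp: doubleton_eq_iff)
  ultimately show ?thesis
    by simp
qed

end
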